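(* Let $\Gamma=(V,E)$ be a reflexive, locally finite, $k$-separable graph with $k\ge2$. Let $A,F$ be $k$-fragments of $\Gamma$ such that $|A|\le|F^{\curlywedge}|$ and $|A\cap F|\ge k-1$. Then $$|A\cap\partial(F)|\le|\partial(A)\cap F^{\curlywedge}|,\qquad |\Gamma(A)\cap\Gamma(F)|\le|A\cap F|+\kappa_k(\Gamma),$$ and $$|F^{\curlywedge}\setminus A^{\curlywedge}|\le|A\setminus F|+\kappa_k(\Gamma)-\kappa_{k-1}(\Gamma).$$
   Context: A graph is a pair $\Gamma=(V,E)$ with $E\subseteq V\times V$; reflexive means $(x,x)\in E$ for all $x$; locally finite means each $\Gamma(x)=\{y:(x,y)\in E\}$ is finite. For $A\subseteq V$: $\Gamma(A)=\bigcup_{x\in A}\Gamma(x)$, $\partial(A)=\Gamma(A)\setminus A$, $A^{\curlywedge}=V\setminus(A\cup\Gamma(A))$. $\Gamma$ is $j$-separable if some finite $X$ has $|X|\ge j$ and $|V\setminus\Gamma(X)|\ge j$; then $\kappa_j(\Gamma)=\min\{|\partial(X)|: X\text{ finite},|X|\ge j,|V\setminus\Gamma(X)|\ge j\}$, and a $j$-fragment is a finite $X$ with $|X|\ge j$, $|V\setminus\Gamma(X)|\ge j$ and $|\partial(X)|=\kappa_j(\Gamma)$. (A $k$-separable graph is also $(k-1)$-separable.) *)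

theory Defs
  imports Main
begin

definition graph :: "'a set \<Rightarrow> ('a \<times> 'a) set \<Rightarrow> bool" where
  "graph V E \<longleftrightarrow> E \<subseteq> V \<times> V"

definition reflexive_graph :: "'a set \<Rightarrow> ('a \<times> 'a) set \<Rightarrow> bool" where
  "reflexive_graph V E \<longleftrightarrow> (\<forall>x\<in>V. (x, x) \<in> E)"

definition nbhd :: "('a \<times> 'a) set \<Rightarrow> 'a \<Rightarrow> 'a set" where
  "nbhd E x = {y. (x, y) \<in> E}"

definition locally_finite :: "'a set \<Rightarrow> ('a \<times> 'a) set \<Rightarrow> bool" where
  "locally_finite V E \<longleftrightarrow> (\<forall>x\<in>V. finite (nbhd E x))"

definition nbhd_set :: "('a \<times> 'a) set \<Rightarrow> 'a set \<Rightarrow> 'a set" where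
  "nbhd_set E A = (\<Union>x\<in>A. nbhd E x)"

definition boundary :: "('a \<times> 'a) set \<Rightarrow> 'a set \<Rightarrow> 'a set" where
  "boundary E A = nbhd_set E A - A"

definition exterior :: "'a set \<Rightarrow> ('a \<times> 'a) set \<Rightarrow> 'a set \<Rightarrow> 'a set" where
  "exterior V E A = V - (A \<union> nbhd_set E A)"

definition admissible :: "'a set \<Rightarrow> ('a \<times> 'a) set \<Rightarrow> nat \<Rightarrow> 'a set \<Rightarrow> bool" where
  "admissible V E j X \<longleftrightarrow> X \<subseteq> V \<and> finite X \<and> card X \<ge> j \<and>
     (infinite (V - nbhd_set E X) \<or> card (V - nbhd_set E X) \<ge> j)"

definition separable :: "'a set \<Rightarrow> ('a \<times> 'a) set \<Rightarrow> nat \<Rightarrow> bool" where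
  "separable V E j \<longleftrightarrow> (\<exists>X. admissible V E j X)"

definition kappa :: "'a set \<Rightarrow> ('a \<times> 'a) set \<Rightarrow> nat \<Rightarrow> nat" where
  "kappa V E j = (LEAST n. \<exists>X. admissible V E j X \<and> card (boundary E X) = n)"

definition fragment :: "'a set \<Rightarrow> ('a \<times> 'a) set \<Rightarrow> nat \<Rightarrow> 'a set \<Rightarrow> bool" where
  "fragment V E j X \<longleftrightarrow> admissible V E j X \<and> card (boundary E X) = kappa V E j"

end

theory Submission
  imports Defs
begin

text \<open>
  In a reflexive locally finite graph every finite vertex set X satisfies
  |\<Gamma>(X)| = |X| + |\<partial>(X)|, and \<Gamma> commutes with unions.  Three general counting
  inequalities hold for all finite A, F \<subseteq> V:
    (exchange)   |A \<inter> \<partial>F| + |\<partial>(A \<union> F)| \<le> |\<partial>F| + |\<partial>A \<inter> ext F|,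
    (modularity) |\<Gamma>A \<inter> \<Gamma>F| + |\<Gamma>(A \<union> F)| = |\<Gamma>A| + |\<Gamma>F|,
    (exterior)   |ext F - ext A| + |\<Gamma>(A \<inter> F)| \<le> |\<Gamma>A|.
  For two k-fragments A, F with |A| \<le> |ext F| and |A \<inter> F| \<ge> k - 1 the key point is
  |\<partial>(A \<union> F)| \<ge> kappa(k): either A \<union> F is itself admissible at level k, or the complement of
  \<Gamma>(A \<union> F) has fewer than k vertices, and counting V in two ways gives the bound.
  Moreover A \<inter> F is admissible at level k - 1, so |\<partial>(A \<inter> F)| \<ge> kappa(k-1).
  The three claims of the theorem then follow by linear arithmetic.
\<close>

lemma kappa_le_boundary: "admissible V E j X \<Longrightarrow> kappa V E j \<le> card (boundary E X)"
  unfolding kappa_def by (rule Least_le) auto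

text \<open>Admissibility passes to subsets that are still large enough, at any lower level:
  shrinking X only enlarges the complement of its neighbourhood.\<close>
lemma admissible_subset:
  assumes adm: "admissible V E j X" and "Y \<subseteq> X" and "i \<le> j" and "card Y \<ge> i"
  shows "admissible V E i Y"
proof -
  have "nbhd_set E Y \<subseteq> nbhd_set E X"
    using \<open>Y \<subseteq> X\<close> unfolding nbhd_set_def by auto
  then have compl: "V - nbhd_set E X \<subseteq> V - nbhd_set E Y" by blast
  have "infinite (V - nbhd_set E Y) \<or> card (V - nbhd_set E Y) \<ge> i"
  proof (cases "finite (V - nbhd_set E Y)")
    case True
    then have "card (V - nbhd_set E X) \<le> card (V - nbhd_set E Y)"
      using compl by (rule card_mono)
    moreover have "card (V - nbhd_set E X) \<ge> j"
      using adm True compl finite_subset unfolding admissible_def by blast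
    ultimately show ?thesis using \<open>i \<le> j\<close> by linarith
  qed simp
  then show ?thesis
    using adm \<open>Y \<subseteq> X\<close> \<open>card Y \<ge> i\<close> finite_subset unfolding admissible_def by blast
qed

lemma nbhd_set_Un: "nbhd_set E (A \<union> B) = nbhd_set E A \<union> nbhd_set E B"
  unfolding nbhd_set_def by auto

lemma nbhd_set_Int: "nbhd_set E (A \<inter> B) \<subseteq> nbhd_set E A \<inter> nbhd_set E B"
  unfolding nbhd_set_def by auto

locale refl_lf_graph =
  fixes V :: "'a set" and E :: "('a \<times> 'a) set"
  assumes graph: "graph V E"
    and refl: "reflexive_graph V E"
    and loc_fin: "locally_finite V E"
begin

lemma nbhd_set_subset: "nbhd_set E X \<subseteq> V"
  using graph unfolding graph_def nbhd_set_def nbhd_def by auto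

lemma subset_nbhd_set: "X \<subseteq> V \<Longrightarrow> X \<subseteq> nbhd_set E X"
  using refl unfolding reflexive_graph_def nbhd_set_def nbhd_def by auto

lemma finite_nbhd_set: "X \<subseteq> V \<Longrightarrow> finite X \<Longrightarrow> finite (nbhd_set E X)"
  using loc_fin unfolding locally_finite_def nbhd_set_def by auto

lemma finite_boundary: "X \<subseteq> V \<Longrightarrow> finite X \<Longrightarrow> finite (boundary E X)"
  using finite_nbhd_set unfolding boundary_def by auto

text \<open>Since X \<subseteq> \<Gamma>(X), the exterior of X is the complement of its neighbourhood.\<close>
lemma exterior_eq: "X \<subseteq> V \<Longrightarrow> exterior V E X = V - nbhd_set E X"
  using subset_nbhd_set unfolding exterior_def by auto

text \<open>|\<Gamma>(X)| = |X| + |\<partial>(X)|, since \<Gamma>(X) is the disjoint union of X and \<partial>(X).\<close>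
lemma card_nbhd_set:
  assumes "X \<subseteq> V" "finite X"
  shows "card (nbhd_set E X) = card X + card (boundary E X)"
proof -
  have "X \<subseteq> nbhd_set E X" "finite (nbhd_set E X)"
    using assms subset_nbhd_set finite_nbhd_set by auto
  then show ?thesis
    unfolding boundary_def by (simp add: card_Diff_subset finite_subset card_mono)
qed

text \<open>Exchange inequality: a boundary point of A \<union> F lies either in \<partial>F outside A or
  in \<partial>A \<inter> ext F, while \<partial>F splits into its parts inside and outside A.\<close>
lemma boundary_exchange:
  assumes A: "A \<subseteq> V" "finite A" and F: "F \<subseteq> V" "finite F"
  shows "card (A \<inter> boundary E F) + card (boundary E (A \<union> F))
           \<le> card (boundary E F) + card (boundary E A \<inter> exterior V E F)"
proof -
  have fin: "finite (boundary E F)" "finite (boundary E A)"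
    using A F finite_boundary by auto
  have "boundary E (A \<union> F) \<subseteq> (boundary E F - A) \<union> (boundary E A \<inter> exterior V E F)"
    using nbhd_set_subset[of A] unfolding boundary_def exterior_def nbhd_set_Un by blast
  then have "card (boundary E (A \<union> F))
               \<le> card ((boundary E F - A) \<union> (boundary E A \<inter> exterior V E F))"
    using fin by (intro card_mono) auto
  also have "\<dots> \<le> card (boundary E F - A) + card (boundary E A \<inter> exterior V E F)"
    by (rule card_Un_le)
  also have "card (boundary E F - A) = card (boundary E F) - card (A \<inter> boundary E F)"
    using fin by (metis card_Diff_subset_Int finite_Int inf_commute)
  finally show ?thesis
    using card_mono[OF fin(1), of "A \<inter> boundary E F"] by auto
qed

text \<open>Modularity of |\<Gamma>(\<cdot>)| on unions, from \<Gamma>(A \<union> F) = \<Gamma>(A) \<union> \<Gamma>(F).\<close>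
lemma card_nbhd_set_modular:
  assumes "A \<subseteq> V" "finite A" "F \<subseteq> V" "finite F"
  shows "card (nbhd_set E A \<inter> nbhd_set E F) + card (nbhd_set E (A \<union> F))
           = card (nbhd_set E A) + card (nbhd_set E F)"
  using card_Un_Int[of "nbhd_set E A" "nbhd_set E F"] assms finite_nbhd_set
  unfolding nbhd_set_Un by simp

text \<open>Exterior inequality: ext F - ext A lies in \<Gamma>(A) - \<Gamma>(F), which is disjoint from
  \<Gamma>(A \<inter> F) \<subseteq> \<Gamma>(A) \<inter> \<Gamma>(F); both parts lie in \<Gamma>(A).\<close>
lemma exterior_diff_bound:
  assumes A: "A \<subseteq> V" "finite A"
  shows "card (exterior V E F - exterior V E A) + card (nbhd_set E (A \<inter> F))
           \<le> card (nbhd_set E A)"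
proof -
  have fin: "finite (nbhd_set E A)" using A finite_nbhd_set by blast
  have "(exterior V E F - exterior V E A) \<union> nbhd_set E (A \<inter> F) \<subseteq> nbhd_set E A"
    "(exterior V E F - exterior V E A) \<inter> nbhd_set E (A \<inter> F) = {}"
    using subset_nbhd_set[OF A(1)] nbhd_set_Int[of E A F] unfolding exterior_def by auto
  then show ?thesis
    using fin card_mono[OF fin] finite_subset card_Un_disjoint
    by (metis (no_types, lifting) finite_Un)
qed

text \<open>If A \<union> F is not admissible, then fewer than k vertices lie
  outside \<Gamma>(A \<union> F); counting the (then finite) vertex set via \<Gamma>(F) and via
  \<Gamma>(A \<union> F), and using |A| \<le> |ext F| and |A \<inter> F| \<ge> k - 1, yields the bound.\<close>
lemma kappa_le_boundary_Un:
  assumes fA: "fragment V E k A" and fF: "fragment V E k F"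
    and small: "finite (exterior V E F) \<longrightarrow> card A \<le> card (exterior V E F)"
    and big_meet: "card (A \<inter> F) \<ge> k - 1"
  shows "kappa V E k \<le> card (boundary E (A \<union> F))"
proof -
  let ?U = "A \<union> F"
  have A: "A \<subseteq> V" "finite A" "card A \<ge> k"
    and F: "F \<subseteq> V" "finite F" "card (boundary E F) = kappa V E k"
    using fA fF unfolding fragment_def admissible_def by auto
  have U: "?U \<subseteq> V" "finite ?U" "card ?U \<ge> k"
    using A F card_mono[of ?U A] by auto
  show ?thesis
  proof (cases "infinite (V - nbhd_set E ?U) \<or> card (V - nbhd_set E ?U) \<ge> k")
    case True
    then have "admissible V E k ?U" using U unfolding admissible_def by auto
    then show ?thesis by (rule kappa_le_boundary)
  next
    case False
    then have fin_rest: "finite (V - nbhd_set E ?U)" and few: "card (V - nbhd_set E ?U) < k"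
      by auto
    have "V - nbhd_set E F \<subseteq> (V - nbhd_set E ?U) \<union> nbhd_set E A"
      unfolding nbhd_set_Un by auto
    then have fin_ext: "finite (V - nbhd_set E F)"
      using fin_rest finite_nbhd_set[OF A(1,2)] finite_subset by blast
    then have "card A \<le> card (V - nbhd_set E F)"
      using small exterior_eq[OF F(1)] by simp
    have "V \<subseteq> (V - nbhd_set E F) \<union> nbhd_set E F" by blast
    then have "finite V"
      using fin_ext finite_nbhd_set[OF F(1,2)] by (meson finite_Un finite_subset)
    then have count: "card V = card (nbhd_set E X) + card (V - nbhd_set E X)" for X
      using card_Diff_subset[of "nbhd_set E X" V] card_mono[of V "nbhd_set E X"]
        nbhd_set_subset[of X] finite_subset[of "nbhd_set E X" V] by simp
    have "card A + card F = card ?U + card (A \<inter> F)"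
      using card_Un_Int[OF A(2) F(2)] by simp
    then show ?thesis
      using count[of ?U] count[of F] \<open>card A \<le> _\<close> few big_meet
        card_nbhd_set[OF U(1,2)] card_nbhd_set[OF F(1,2)] F(3)
      by linarith
  qed
qed

end

theorem mainTheorem16:
  fixes V :: "'a set" and E :: "('a \<times> 'a) set" and k :: nat and A F :: "'a set"
  assumes "graph V E"
    and "reflexive_graph V E"
    and "locally_finite V E"
    and "separable V E k"
    and "k \<ge> 2"
    and "fragment V E k A"
    and "fragment V E k F"
    and "finite (exterior V E F) \<longrightarrow> card A \<le> card (exterior V E F)"
    and "card (A \<inter> F) \<ge> k - 1"
  shows "card (A \<inter> boundary E F) \<le> card (boundary E A \<inter> exterior V E F) \<and>
         card (nbhd_set E A \<inter> nbhd_set E F) \<le> card (A \<inter> F) + kappa V E k \<and>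
         int (card (exterior V E F - exterior V E A))
           \<le> int (card (A - F)) + int (kappa V E k) - int (kappa V E (k - 1))"
proof -
  interpret refl_lf_graph V E using assms(1-3) by unfold_locales
  have A: "A \<subseteq> V" "finite A" "card (boundary E A) = kappa V E k"
    and F: "F \<subseteq> V" "finite F" "card (boundary E F) = kappa V E k"
    using assms(6,7) unfolding fragment_def admissible_def by auto
  have union: "kappa V E k \<le> card (boundary E (A \<union> F))"
    using kappa_le_boundary_Un assms(6-9) by blast
  have "admissible V E k F" using assms(7) unfolding fragment_def by blast
  then have "admissible V E (k - 1) (A \<inter> F)"
    using Int_lower2 diff_le_self assms(9) by (rule admissible_subset)
  then have meet: "kappa V E (k - 1) \<le> card (boundary E (A \<inter> F))"
    by (rule kappa_le_boundary)
  have split_A: "card A = card (A - F) + card (A \<inter> F)"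
    using card_Int_Diff[OF A(2), of F] by (simp add: Int_commute)
  have cards: "card A + card F = card (A \<union> F) + card (A \<inter> F)"
    using card_Un_Int[OF A(2) F(2)] by simp
  have AF: "A \<union> F \<subseteq> V" "finite (A \<union> F)" "A \<inter> F \<subseteq> V" "finite (A \<inter> F)"
    using A F by auto
  have claim1: "card (A \<inter> boundary E F) \<le> card (boundary E A \<inter> exterior V E F)"
    using boundary_exchange[OF A(1,2) F(1,2)] union F(3) by linarith
  have claim2: "card (nbhd_set E A \<inter> nbhd_set E F) \<le> card (A \<inter> F) + kappa V E k"
    using card_nbhd_set_modular[OF A(1,2) F(1,2)] card_nbhd_set[OF A(1,2)]
      card_nbhd_set[OF F(1,2)] card_nbhd_set[OF AF(1,2)] A(3) F(3) union cards by linarith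
  have "card (exterior V E F - exterior V E A) + kappa V E (k - 1) \<le> card (A - F) + kappa V E k"
    using exterior_diff_bound[OF A(1,2), of F] card_nbhd_set[OF A(1,2)]
      card_nbhd_set[OF AF(3,4)] A(3) meet split_A by linarith
  then have claim3: "int (card (exterior V E F - exterior V E A))
      \<le> int (card (A - F)) + int (kappa V E k) - int (kappa V E (k - 1))"
    by linarith
  show ?thesis using claim1 claim2 claim3 by blast
qed

end
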